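(* Fix $k\in\mathbb{N}$, $q\in(0,1)$, $s=q^{-1/2}$ and $u>s$. There is a constant $\tilde C$ depending on $k,q,u$ such that for every $\lambda\in\mathsf{Sign}_k^+$ and every $\pi\in\mathcal{P}_{\lambda/\varnothing}$, $$|\mathcal{W}(\pi)|\le\tilde C\left(\frac{u-s}{su-1}\right)^{|\lambda|},$$ where $|\lambda|=\lambda_1+\dots+\lambda_k$.
   Context: $\mathsf{Sign}_k^+$ is the set of $\lambda=(\lambda_1\ge\dots\ge\lambda_k)$ with $\lambda_i\in\mathbb{Z}_{\ge0}$. A vertex has type $(i_1,j_1;i_2,j_2)$ if $i_1$ (resp. $j_1$) paths enter from below (resp. the left) and $i_2$ (resp. $j_2$) leave upward (resp. right). Weights with spectral parameter $z$ ($g\in\mathbb{Z}_{\ge0}$; all other types weight $0$): $w_z(g,0;g,0)=\frac{1-sq^gz}{1-sz}$, $w_z(g+1,0;g,1)=\frac{(1-s^2q^g)z}{1-sz}$, $w_z(g,1;g,1)=\frac{z-sq^g}{1-sz}$, $w_z(g,1;g+1,0)=\frac{1-q^{g+1}}{1-sz}$. For $\lambda\in\mathsf{Sign}_k^+$, $\mathcal{P}_{\lambda/\varnothing}$ is the set of collections of up-right paths in $\mathbb{Z}_{\ge0}\times\{1,\dots,k\}$ with at most one path per horizontal edge (vertical edges may carry several), one path entering through $(-1,y)\to(0,y)$ for each $y=1,\dots,k$, none entering from the bottom, and paths exiting at the top through $(\lambda_i,k)\to(\lambda_i,k+1)$, $i=1,\dots,k$ (with multiplicity). For such $\pi$, $\mathcal{W}(\pi)=\prod_{(x,y)}w_u(\text{type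 of }(x,y))$ (all spectral parameters equal to $u$). *)

theory Defs
  imports Complex_Main
begin

definition Sign_plus :: "nat \<Rightarrow> nat list set" where
  "Sign_plus k = {lam. length lam = k \<and> sorted_wrt (\<ge>) lam}"

definition wt :: "real \<Rightarrow> real \<Rightarrow> real \<Rightarrow> nat \<Rightarrow> nat \<Rightarrow> nat \<Rightarrow> nat \<Rightarrow> real" where
  "wt q s z i1 j1 i2 j2 =
    (if j1 = 0 \<and> j2 = 0 \<and> i1 = i2 then (1 - s * q ^ i1 * z) / (1 - s * z)
     else if j1 = 0 \<and> j2 = 1 \<and> i1 = i2 + 1 then (1 - s^2 * q ^ i2) * z / (1 - s * z)
     else if j1 = 1 \<and> j2 = 1 \<and> i1 = i2 then (z - s * q ^ i1) / (1 - s * z)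
     else if j1 = 1 \<and> j2 = 0 \<and> i2 = i1 + 1 then (1 - q ^ (i1 + 1)) / (1 - s * z)
     else 0)"

text \<open>A path collection is encoded by edge occupation numbers:
  H x y = number of paths on the horizontal edge (x-1,y) -> (x,y)  (x \<ge> 0, 1 \<le> y \<le> k),
  V x y = number of paths on the vertical edge (x,y) -> (x,y+1)    (x \<ge> 0, 0 \<le> y \<le> k),
  so V x 0 counts paths entering from the bottom and V x k paths exiting at the top.\<close>
definition is_config :: "nat \<Rightarrow> nat list \<Rightarrow> (nat \<Rightarrow> nat \<Rightarrow> nat) \<Rightarrow> (nat \<Rightarrow> nat \<Rightarrow> nat) \<Rightarrow> bool" where
  "is_config k lam H V \<longleftrightarrow>
     (\<forall>y\<in>{1..k}. H 0 y = 1) \<and>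
     (\<forall>x. \<forall>y\<in>{1..k}. H x y \<le> 1) \<and>
     (\<forall>x. V x 0 = 0) \<and>
     (\<forall>x. V x k = count_list lam x) \<and>
     (\<forall>x. \<forall>y\<in>{1..k}. V x (y - 1) + H x y = V x y + H (Suc x) y) \<and>
     (\<exists>N. \<forall>x\<ge>N. \<forall>y\<in>{0..k}. H x y = 0 \<and> V x y = 0)"

text \<open>Vertices (x,y) with at least one occupied incident edge; all other vertices
  have type (0,0;0,0), of weight 1.\<close>
definition occupied :: "nat \<Rightarrow> (nat \<Rightarrow> nat \<Rightarrow> nat) \<Rightarrow> (nat \<Rightarrow> nat \<Rightarrow> nat) \<Rightarrow> (nat \<times> nat) set" where
  "occupied k H V = {(x, y). y \<in> {1..k} \<and>
      (V x (y - 1) \<noteq> 0 \<or> H x y \<noteq> 0 \<or> V x y \<noteq> 0 \<or> H (Suc x) y \<noteq> 0)}"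

definition Wt :: "real \<Rightarrow> real \<Rightarrow> real \<Rightarrow> nat \<Rightarrow> (nat \<Rightarrow> nat \<Rightarrow> nat) \<Rightarrow> (nat \<Rightarrow> nat \<Rightarrow> nat) \<Rightarrow> real" where
  "Wt q s u k H V = (\<Prod>(x, y) \<in> occupied k H V. wt q s u (V x (y - 1)) (H x y) (V x y) (H (Suc x) y))"

end

theory Submission imports Defs begin

text \<open>Call a vertex vertically empty if neither of its vertical edges is occupied. An occupied
  vertically empty vertex has type (0,1;0,1), of weight (u-s)/(1-su), of modulus
  r = (u-s)/(su-1) \<le> 1. Flux conservation shows that at most y vertical edges of level y are
  occupied, so at most 2k^2 occupied vertices are not vertically empty, and each of them has
  weight bounded by a constant M depending only on q, s, u. On the other hand the occupied
  horizontal edges (x,y) -> (x+1,y) are exactly |\<lambda>| many, since #{i. \<lambda>_i > x} paths cross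
  the vertical line between columns x and x+1. Hence at least |\<lambda>| - 2k^2 occupied vertices are
  vertically empty and |W(\<pi>)| \<le> (M/r)^(2k^2) r^|\<lambda>|.\<close>

lemma card_support_le_sum:
  assumes "finite S"
  shows "card {x\<in>S. (f::'a \<Rightarrow> nat) x \<noteq> 0} \<le> sum f S"
proof -
  have "card {x\<in>S. f x \<noteq> 0} = (\<Sum>x\<in>{x\<in>S. f x \<noteq> 0}. 1)" by simp
  also have "\<dots> \<le> (\<Sum>x\<in>{x\<in>S. f x \<noteq> 0}. f x)" by (rule sum_mono) auto
  also have "\<dots> \<le> sum f S" by (rule sum_mono2) (use assms in auto)
  finally show ?thesis .
qed

lemma card_support_eq_sum_of_le_1:
  assumes "finite S" and "\<And>x. x \<in> S \<Longrightarrow> (f::'a \<Rightarrow> nat) x \<le> 1"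
  shows "card {x\<in>S. f x \<noteq> 0} = sum f S"
proof -
  have "sum f S = sum f {x\<in>S. f x \<noteq> 0}" by (rule sum.mono_neutral_right) (use assms in auto)
  also have "\<dots> = (\<Sum>x\<in>{x\<in>S. f x \<noteq> 0}. 1)" by (rule sum.cong) (use assms in force)+
  finally show ?thesis by simp
qed

lemma sum_length_filter_less_eq_sum_list:
  assumes "\<forall>i\<in>set xs. i \<le> N"
  shows "(\<Sum>x<N. length (filter (\<lambda>i. x < i) xs)) = sum_list xs"
  using assms
proof (induction xs)
  case Nil
  then show ?case by simp
next
  case (Cons a xs)
  have "(\<Sum>x<N. if x < a then 1 else 0) = card {x\<in>{..<N}. x < a}"
    by (simp add: sum.If_cases Int_def)
  also have "{x\<in>{..<N}. x < a} = {..<a}" using Cons.prems by auto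
  finally have "(\<Sum>x<N. if x < a then 1 else 0) = a" by simp
  moreover have "length (filter (\<lambda>i. x < i) (a # xs))
      = (if x < a then 1 else 0) + length (filter (\<lambda>i. x < i) xs)" for x
    by simp
  ultimately show ?case using Cons by (simp only: sum.distrib) simp
qed

lemma length_filter_le_eq:
  "length (filter (\<lambda>i. x \<le> i) xs) = length (filter (\<lambda>i. Suc x \<le> i) xs) + count_list xs x"
  by (induction xs) auto

lemma sum_atLeast1_atMost_pred:
  "(\<Sum>y\<in>{1..n}. (f::nat \<Rightarrow> nat) (y - 1)) + f n = (\<Sum>y\<in>{1..n}. f y) + f 0"
  by (induction n) (auto simp: add_ac)

lemma abs_wt_le:
  fixes q s u :: real
  assumes "0 < q" "q \<le> 1" "0 \<le> s" "0 \<le> u" "1 < s * u"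
  shows "\<bar>wt q s u a b c d\<bar> \<le> (1 + s + u + s * u + s\<^sup>2 * u) / (s * u - 1)"
proof -
  define T where "T = 1 + s + u + s * u + s\<^sup>2 * u"
  have numerator: "\<bar>n / (1 - s * u)\<bar> \<le> T / (s * u - 1)" if "\<bar>n\<bar> \<le> T" for n
    using that assms by (simp add: abs_divide abs_minus_commute divide_right_mono)
  have q_pow: "0 \<le> q ^ i" "q ^ i \<le> 1" for i
    using assms by (auto simp: power_le_one)
  have "\<bar>1 - s * q ^ i * u\<bar> \<le> T" "\<bar>(1 - s\<^sup>2 * q ^ i) * u\<bar> \<le> T"
      "\<bar>u - s * q ^ i\<bar> \<le> T" "\<bar>1 - q ^ Suc i\<bar> \<le> T" for i
  proof -
    have "s * q ^ i \<le> s" "s\<^sup>2 * q ^ i \<le> s\<^sup>2"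
      using assms q_pow[of i] by (simp_all add: mult_left_le)
    then have "s * q ^ i * u \<le> s * u" "s\<^sup>2 * q ^ i * u \<le> s\<^sup>2 * u"
      using assms by (simp_all add: mult_right_mono)
    moreover have "0 \<le> s * q ^ i * u" "0 \<le> s\<^sup>2 * q ^ i * u" "0 \<le> s * q ^ i" "0 \<le> s * u"
      using assms q_pow[of i] by simp_all
    ultimately show "\<bar>1 - s * q ^ i * u\<bar> \<le> T" "\<bar>(1 - s\<^sup>2 * q ^ i) * u\<bar> \<le> T"
        "\<bar>u - s * q ^ i\<bar> \<le> T" "\<bar>1 - q ^ Suc i\<bar> \<le> T"
      using assms \<open>s * q ^ i \<le> s\<close> q_pow[of "Suc i"]
      unfolding T_def abs_le_iff left_diff_distrib by (intro conjI; linarith)+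
  qed
  moreover have "0 \<le> T / (s * u - 1)" using assms unfolding T_def by simp
  ultimately show ?thesis
    unfolding wt_def T_def[symmetric] using numerator by auto
qed

locale path_config =
  fixes k :: nat and lam :: "nat list" and H V :: "nat \<Rightarrow> nat \<Rightarrow> nat" and N :: nat
  assumes config: "is_config k lam H V"
    and vanishing: "\<And>x y. N \<le> x \<Longrightarrow> y \<le> k \<Longrightarrow> H x y = 0 \<and> V x y = 0"
begin

lemma H_left: "y \<in> {1..k} \<Longrightarrow> H 0 y = 1"
  and H_le_1: "y \<in> {1..k} \<Longrightarrow> H x y \<le> 1"
  and V_bottom: "V x 0 = 0"
  and V_top: "V x k = count_list lam x"
  and flux: "y \<in> {1..k} \<Longrightarrow> V x (y - 1) + H x y = V x y + H (Suc x) y"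
  using config unfolding is_config_def by blast+

lemma parts_less: "i \<in> set lam \<Longrightarrow> i < N"
  using V_top[of i] vanishing[of i k] by (metis count_list_0_iff le_refl not_le)

lemma occupied_subset: "occupied k H V \<subseteq> {..<N} \<times> {1..k}"
proof (rule subrelI)
  fix x y assume xy: "(x, y) \<in> occupied k H V"
  then have "y \<in> {1..k}" unfolding occupied_def by simp
  have "x < N"
  proof (rule ccontr)
    assume "\<not> x < N"
    then show False
      using xy \<open>y \<in> {1..k}\<close> vanishing[of x "y - 1"] vanishing[of x y] vanishing[of "Suc x" y]
      unfolding occupied_def by (auto simp: le_diff_conv)
  qed
  with \<open>y \<in> {1..k}\<close> show "(x, y) \<in> {..<N} \<times> {1..k}" by simp
qed

lemma finite_occupied: "finite (occupied k H V)"
  using occupied_subset finite_subset by blast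

text \<open>The y paths entering in rows 1..y all cross level y upwards.\<close>
lemma sum_vertical_level: "y \<le> k \<Longrightarrow> (\<Sum>x<N. V x y) = y"
proof (induction y)
  case 0
  then show ?case by (simp add: V_bottom)
next
  case (Suc y)
  have "(\<Sum>x<N. V x y + H x (Suc y)) = (\<Sum>x<N. V x (Suc y) + H (Suc x) (Suc y))"
    using flux[of "Suc y"] Suc.prems by (intro sum.cong) auto
  moreover have "(\<Sum>x<N. H x (Suc y)) + H N (Suc y) = H 0 (Suc y) + (\<Sum>x<N. H (Suc x) (Suc y))"
    using sum.lessThan_Suc_shift[of "\<lambda>x. H x (Suc y)" N] by simp
  moreover have "H N (Suc y) = 0" "H 0 (Suc y) = 1"
    using vanishing[of N] H_left Suc.prems by auto
  ultimately show ?case using Suc by (simp add: sum.distrib)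
qed

text \<open>Column x is crossed horizontally by the paths that have not yet exited, i.e. by
  #{i. x \<le> \<lambda>_i} paths.\<close>
lemma sum_horizontal_column: "(\<Sum>y\<in>{1..k}. H x y) = length (filter (\<lambda>i. x \<le> i) lam)"
proof (induction "N - x" arbitrary: x)
  case 0
  then have "(\<Sum>y\<in>{1..k}. H x y) = 0" using vanishing[of x] by simp
  moreover have "filter (\<lambda>i. x \<le> i) lam = []"
    using 0 parts_less by (auto simp: filter_empty_conv not_le dest: order.strict_trans2)
  ultimately show ?case by simp
next
  case (Suc d)
  have "(\<Sum>y\<in>{1..k}. V x (y - 1) + H x y) = (\<Sum>y\<in>{1..k}. V x y + H (Suc x) y)"
    using flux by (intro sum.cong) auto
  moreover have "(\<Sum>y\<in>{1..k}. V x (y - 1)) + V x k = (\<Sum>y\<in>{1..k}. V x y) + V x 0"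
    by (rule sum_atLeast1_atMost_pred)
  moreover note length_filter_le_eq[of x lam]
  moreover have "d = N - Suc x" using Suc.hyps by simp
  ultimately show ?case using Suc.hyps(1) V_top V_bottom by (simp add: sum.distrib)
qed

lemma card_horizontal_edges: "card (SIGMA x:{..<N}. {y\<in>{1..k}. H (Suc x) y \<noteq> 0}) = sum_list lam"
proof -
  have "card (SIGMA x:{..<N}. {y\<in>{1..k}. H (Suc x) y \<noteq> 0})
      = (\<Sum>x<N. card {y\<in>{1..k}. H (Suc x) y \<noteq> 0})"
    by simp
  also have "\<dots> = (\<Sum>x<N. \<Sum>y\<in>{1..k}. H (Suc x) y)"
    using H_le_1 by (intro sum.cong card_support_eq_sum_of_le_1) auto
  also have "\<dots> = (\<Sum>x<N. length (filter (\<lambda>i. Suc x \<le> i) lam))"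
    by (simp only: sum_horizontal_column)
  also have "\<dots> = (\<Sum>x<N. length (filter (\<lambda>i. x < i) lam))"
    by (simp add: Suc_le_eq)
  also have "\<dots> = sum_list lam"
    using parts_less by (intro sum_length_filter_less_eq_sum_list) (auto simp: less_imp_le)
  finally show ?thesis .
qed

lemma sum_list_le_card_occupied: "sum_list lam \<le> card (occupied k H V)"
  unfolding card_horizontal_edges[symmetric] using finite_occupied
  by (intro card_mono) (auto simp: occupied_def)

lemma card_vertically_occupied_le:
  "card {(x, y) \<in> occupied k H V. V x (y - 1) \<noteq> 0 \<or> V x y \<noteq> 0} \<le> 2 * k * k"
proof -
  define S where "S = (SIGMA y:{1..k}. {x\<in>{..<N}. V x y \<noteq> 0})"
  have "card S = (\<Sum>y\<in>{1..k}. card {x\<in>{..<N}. V x y \<noteq> 0})"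
    unfolding S_def by simp
  also have "\<dots> \<le> (\<Sum>y\<in>{1..k}. k)"
  proof (rule sum_mono)
    fix y assume y: "y \<in> {1..k}"
    have "card {x\<in>{..<N}. V x y \<noteq> 0} \<le> (\<Sum>x<N. V x y)"
      by (rule card_support_le_sum) simp
    then show "card {x\<in>{..<N}. V x y \<noteq> 0} \<le> k"
      using sum_vertical_level[of y] y by simp
  qed
  finally have card_S: "card S \<le> k * k" by simp
  have finite_S: "finite S" unfolding S_def by simp
  have "{(x, y) \<in> occupied k H V. V x (y - 1) \<noteq> 0 \<or> V x y \<noteq> 0}
      \<subseteq> (\<lambda>(y, x). (x, y)) ` S \<union> (\<lambda>(y, x). (x, Suc y)) ` S"
  proof (rule subrelI)
    fix x y assume "(x, y) \<in> {(x, y) \<in> occupied k H V. V x (y - 1) \<noteq> 0 \<or> V x y \<noteq> 0}"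
    then have xy: "(x, y) \<in> occupied k H V" and "V x (y - 1) \<noteq> 0 \<or> V x y \<noteq> 0" by simp_all
    moreover have "x < N" "y \<in> {1..k}" using xy occupied_subset by auto
    moreover have "y - 1 \<noteq> 0" if "V x (y - 1) \<noteq> 0"
      using that V_bottom by metis
    ultimately have "(y, x) \<in> S \<or> (y - 1, x) \<in> S \<and> y = Suc (y - 1)"
      unfolding S_def by auto
    then show "(x, y) \<in> (\<lambda>(y, x). (x, y)) ` S \<union> (\<lambda>(y, x). (x, Suc y)) ` S"
      by force
  qed
  then have "card {(x, y) \<in> occupied k H V. V x (y - 1) \<noteq> 0 \<or> V x y \<noteq> 0}
      \<le> card ((\<lambda>(y, x). (x, y)) ` S \<union> (\<lambda>(y, x). (x, Suc y)) ` S)"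
    using finite_S by (intro card_mono) simp_all
  also have "\<dots> \<le> card ((\<lambda>(y, x). (x, y)) ` S) + card ((\<lambda>(y, x). (x, Suc y)) ` S)"
    by (rule card_Un_le)
  also have "\<dots> \<le> 2 * k * k"
    using card_image_le[OF finite_S, of "\<lambda>(y, x). (x, y)"]
      card_image_le[OF finite_S, of "\<lambda>(y, x). (x, Suc y)"] card_S by linarith
  finally show ?thesis .
qed

lemma abs_wt_vertically_empty:
  assumes "(x, y) \<in> occupied k H V" and "V x (y - 1) = 0" and "V x y = 0"
  shows "\<bar>wt q s u (V x (y - 1)) (H x y) (V x y) (H (Suc x) y)\<bar> \<le> \<bar>wt q s u 0 1 0 1\<bar>"
proof -
  have "y \<in> {1..k}" using assms(1) occupied_subset by auto
  then have "H x y \<le> 1" "H (Suc x) y \<le> 1" using H_le_1 by auto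
  moreover have "H x y \<noteq> 0 \<or> H (Suc x) y \<noteq> 0"
    using assms unfolding occupied_def by auto
  \<comment> \<open>so the vertex has type (0,1;0,0), (0,0;0,1) or (0,1;0,1), and the first two have weight 0\<close>
  ultimately show ?thesis
    using assms(2,3) unfolding wt_def by (auto simp: le_Suc_eq)
qed

lemma abs_Wt_le:
  fixes q s u r M :: real
  assumes wt_le: "\<And>a b c d. \<bar>wt q s u a b c d\<bar> \<le> M" and "1 \<le> M"
    and r: "\<bar>wt q s u 0 1 0 1\<bar> = r" "0 < r" "r \<le> 1"
  shows "\<bar>Wt q s u k H V\<bar> \<le> (M / r) ^ (2 * k * k) * r ^ sum_list lam"
proof -
  define w where "w = (\<lambda>(x, y). wt q s u (V x (y - 1)) (H x y) (V x y) (H (Suc x) y))"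
  define A where "A = {(x, y) \<in> occupied k H V. V x (y - 1) = 0 \<and> V x y = 0}"
  define B where "B = {(x, y) \<in> occupied k H V. V x (y - 1) \<noteq> 0 \<or> V x y \<noteq> 0}"
  define K where "K = 2 * k * k"
  have occupied_eq: "occupied k H V = A \<union> B" and disjoint: "A \<inter> B = {}"
    unfolding A_def B_def by auto
  have finite: "finite A" "finite B"
    using finite_occupied unfolding occupied_eq by simp_all
  have card_B: "card B \<le> K"
    unfolding B_def K_def by (rule card_vertically_occupied_le)
  have card_A: "sum_list lam \<le> card A + K"
    using sum_list_le_card_occupied card_B card_Un_disjoint[OF finite disjoint]
    unfolding occupied_eq by linarith
  have w_A: "\<bar>w p\<bar> \<le> r" if "p \<in> A" for p
    using that abs_wt_vertically_empty r unfolding A_def w_def by auto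
  have "\<bar>Wt q s u k H V\<bar> = (\<Prod>p\<in>A. \<bar>w p\<bar>) * (\<Prod>p\<in>B. \<bar>w p\<bar>)"
    unfolding Wt_def occupied_eq w_def[symmetric] abs_prod
    by (rule prod.union_disjoint[OF finite disjoint])
  also have "\<dots> \<le> r ^ card A * M ^ K"
  proof (rule mult_mono)
    show "(\<Prod>p\<in>A. \<bar>w p\<bar>) \<le> r ^ card A"
      using prod_mono[of A "\<lambda>p. \<bar>w p\<bar>" "\<lambda>_. r"] w_A by simp
    have "(\<Prod>p\<in>B. \<bar>w p\<bar>) \<le> M ^ card B"
      using prod_mono[of B "\<lambda>p. \<bar>w p\<bar>" "\<lambda>_. M"] wt_le unfolding w_def by (simp add: case_prod_beta)
    also have "\<dots> \<le> M ^ K" using card_B \<open>1 \<le> M\<close> by (rule power_increasing)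
    finally show "(\<Prod>p\<in>B. \<bar>w p\<bar>) \<le> M ^ K" .
  qed (simp_all add: prod_nonneg less_imp_le r)
  also have "\<dots> = (M / r) ^ K * r ^ (card A + K)"
    using r by (simp add: power_add power_divide)
  also have "\<dots> \<le> (M / r) ^ K * r ^ sum_list lam"
    using r card_A \<open>1 \<le> M\<close> by (intro mult_left_mono power_decreasing) auto
  finally show ?thesis unfolding K_def .
qed

end

lemma one_less_powr_neg_half:
  fixes q :: real
  assumes "0 < q" and "q < 1"
  shows "1 < q powr (-1/2)"
  using powr_less_mono2_neg[of "-1/2" q 1] assms by simp

lemma pass_ratio_bounds:
  fixes s u :: real
  assumes "1 < s" and "s < u"
  shows "0 < (u - s) / (s * u - 1)" and "(u - s) / (s * u - 1) \<le> 1"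
proof -
  have "1 < s * u" using assms mult_strict_mono[of 1 s 1 u] by simp
  moreover have "0 \<le> (s - 1) * (u + 1)" using assms by simp
  ultimately show "0 < (u - s) / (s * u - 1)" "(u - s) / (s * u - 1) \<le> 1"
    using assms by (simp_all add: algebra_simps)
qed

lemma is_config_imp_path_config:
  assumes "is_config k lam H V"
  obtains N where "path_config k lam H V N"
proof -
  obtain N where "\<forall>x\<ge>N. \<forall>y\<in>{0..k}. H x y = 0 \<and> V x y = 0"
    using assms unfolding is_config_def by blast
  then have "path_config k lam H V N"
    using assms unfolding path_config_def by simp
  then show thesis by (rule that)
qed

theorem lemma3p5:
  fixes k :: nat and q u :: real
  assumes "0 < q" and "q < 1" and "u > q powr (-1/2)"
  shows "\<exists>C::real. \<forall>lam H V. lam \<in> Sign_plus k \<longrightarrow> is_config k lam H V \<longrightarrow>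
           \<bar>Wt q (q powr (-1/2)) u k H V\<bar>
             \<le> C * ((u - q powr (-1/2)) / (q powr (-1/2) * u - 1)) ^ sum_list lam"
proof -
  define s where "s = q powr (-1/2)"
  define r where "r = (u - s) / (s * u - 1)"
  define M where "M = max 1 ((1 + s + u + s * u + s\<^sup>2 * u) / (s * u - 1))"
  have "1 < s" "s < u"
    using one_less_powr_neg_half assms unfolding s_def by simp_all
  then have su: "1 < s * u" using mult_strict_mono[of 1 s 1 u] by simp
  have r: "0 < r" "r \<le> 1"
    unfolding r_def using pass_ratio_bounds \<open>1 < s\<close> \<open>s < u\<close> by blast+
  have "\<bar>wt q s u 0 1 0 1\<bar> = r"
    unfolding r_def wt_def using \<open>s < u\<close> su by (simp add: abs_divide abs_minus_commute)
  moreover have "\<bar>wt q s u a b c d\<bar> \<le> M" for a b c d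
    unfolding M_def using abs_wt_le[of q s u a b c d] assms \<open>1 < s\<close> \<open>s < u\<close> su by simp
  moreover have "1 \<le> M" unfolding M_def by simp
  ultimately have "\<bar>Wt q s u k H V\<bar> \<le> (M / r) ^ (2 * k * k) * r ^ sum_list lam"
    if "is_config k lam H V" for lam H V
    using path_config.abs_Wt_le is_config_imp_path_config[OF that] r by metis
  then show ?thesis unfolding s_def[symmetric] r_def[symmetric] by blast
qed

end
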